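(* Let $n=2$, $d\ge 225\log 6$, $\sigma_1^2=3$, $\sigma_2^2=1$, and let $\bar\Theta_\kappa=\{\boldsymbol\theta\in(\mathbb R^d)^2:\ \bar\kappa(\boldsymbol\theta,\boldsymbol\sigma)\ge\kappa\}$. If $\kappa<0.1(2d)^{1/2}$, then $$\sup_{\boldsymbol\theta\in\bar\Theta_\kappa}\mathbf P_{\boldsymbol\theta,\boldsymbol\sigma,id}(\pi^{\mathrm{gr}}\ne id)\ge\frac12,$$ where $id$ is the identity permutation.
   Context: Model: integers $n\ge2$, $d\ge1$. Unknown parameters: $\boldsymbol\theta=(\theta_1,\dots,\theta_n)$ with $\theta_i\in\mathbb R^d$, noise levels $\boldsymbol\sigma=(\sigma_1,\dots,\sigma_n)$ with $\sigma_i>0$, and a permutation $\pi^*\in\mathfrak S_n$. One observes $X_i=\theta_i+\sigma_i\xi_i$, $X_i^\#=\theta_{\pi^*(i)}+\sigma_i^\#\xi_i^\#$, $i=1,\dots,n$, where $\sigma_i^\#=\sigma_{\pi^*(i)}$ and $\xi_1,\dots,\xi_n,\xi_1^\#,\dots,\xi_n^\#$ are i.i.d. $\mathcal N(0,I_d)$. The law of the data is $\mathbf P_{\boldsymbol\theta,\boldsymbol\sigma,\pi^*}$. Greedy estimator: $\pi^{\mathrm{gr}}(1)=\arg\min_{j\in\{1,\dots,n\}}\|X_j-X_1^\#\|$ and recursively, for $i\ge2$, $\pi^{\mathrm{gr}}(i)=\arg\min_{j\notin\{\pi^{\mathrm{gr}}(1),\dots,\pi^{\mathrm{gr}}(i-1)\}}\|X_j-X_i^\#\|$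 (ties broken arbitrarily). Relative separation distance: $\bar\kappa(\boldsymbol\theta,\boldsymbol\sigma)=\min_{i\ne j}\frac{\|\theta_i-\theta_j\|}{(\sigma_i^2+\sigma_j^2)^{1/2}}$. *)

theory Defs
  imports "HOL-Probability.Probability"
begin

text \<open>Indices are 0-based: the paper's index i in 1..n corresponds to i-1 in 0..<n.
  Vectors in R^d are elements of real^'d, with d = CARD('d).\<close>

text \<open>Underlying probability space: i.i.d. standard Gaussian coordinates
  omega (i, b, k), i < n, b = False for xi_i and b = True for xi_i^#, k a coordinate.\<close>
definition noise_space :: "nat \<Rightarrow> (nat \<times> bool \<times> 'd::finite \<Rightarrow> real) measure" where
  "noise_space n = PiM ({..<n} \<times> (UNIV :: bool set) \<times> (UNIV :: 'd set))
                        (\<lambda>_. density lborel std_normal_density)"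

definition xi :: "(nat \<times> bool \<times> 'd::finite \<Rightarrow> real) \<Rightarrow> nat \<Rightarrow> real^'d" where
  "xi \<omega> i = (\<chi> k. \<omega> (i, False, k))"

definition xi_sharp :: "(nat \<times> bool \<times> 'd::finite \<Rightarrow> real) \<Rightarrow> nat \<Rightarrow> real^'d" where
  "xi_sharp \<omega> i = (\<chi> k. \<omega> (i, True, k))"

definition obsX :: "(nat \<Rightarrow> real^'d::finite) \<Rightarrow> (nat \<Rightarrow> real) \<Rightarrow>
    (nat \<times> bool \<times> 'd \<Rightarrow> real) \<Rightarrow> nat \<Rightarrow> real^'d" where
  "obsX \<theta> \<sigma> \<omega> i = \<theta> i + \<sigma> i *\<^sub>R xi \<omega> i"

definition obsXs :: "(nat \<Rightarrow> real^'d::finite) \<Rightarrow> (nat \<Rightarrow> real) \<Rightarrow> (nat \<Rightarrow> nat) \<Rightarrow>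
    (nat \<times> bool \<times> 'd \<Rightarrow> real) \<Rightarrow> nat \<Rightarrow> real^'d" where
  "obsXs \<theta> \<sigma> \<pi> \<omega> i = \<theta> (\<pi> i) + \<sigma> (\<pi> i) *\<^sub>R xi_sharp \<omega> i"

definition Prob :: "nat \<Rightarrow> (nat \<Rightarrow> real^'d::finite) \<Rightarrow> (nat \<Rightarrow> real) \<Rightarrow> (nat \<Rightarrow> nat) \<Rightarrow>
    ((nat \<Rightarrow> real^'d) \<Rightarrow> (nat \<Rightarrow> real^'d) \<Rightarrow> bool) \<Rightarrow> real" where
  "Prob n \<theta> \<sigma> \<pi> E = measure (noise_space n)
     {\<omega> \<in> space (noise_space n). E (obsX \<theta> \<sigma> \<omega>) (obsXs \<theta> \<sigma> \<pi> \<omega>)}"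

text \<open>Greedy estimator; ties broken by smallest index.  gr_prefix X Xs n i lists
  pi_gr(0), ..., pi_gr(i-1).\<close>
fun gr_prefix :: "(nat \<Rightarrow> real^'d::finite) \<Rightarrow> (nat \<Rightarrow> real^'d) \<Rightarrow> nat \<Rightarrow> nat \<Rightarrow> nat list" where
  "gr_prefix X Xs n 0 = []"
| "gr_prefix X Xs n (Suc i) =
     (let U = set (gr_prefix X Xs n i) in
      gr_prefix X Xs n i @
        [LEAST j. j \<in> {..<n} - U \<and> (\<forall>j' \<in> {..<n} - U. norm (X j - Xs i) \<le> norm (X j' - Xs i))])"

definition greedy :: "(nat \<Rightarrow> real^'d::finite) \<Rightarrow> (nat \<Rightarrow> real^'d) \<Rightarrow> nat \<Rightarrow> nat \<Rightarrow> nat" where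
  "greedy X Xs n i = (if i < n then gr_prefix X Xs n n ! i else i)"

definition kappa_bar :: "nat \<Rightarrow> (nat \<Rightarrow> real^'d::finite) \<Rightarrow> (nat \<Rightarrow> real) \<Rightarrow> real" where
  "kappa_bar n \<theta> \<sigma> = Min {norm (\<theta> i - \<theta> j) / sqrt ((\<sigma> i)\<^sup>2 + (\<sigma> j)\<^sup>2) | i j. i < n \<and> j < n \<and> i \<noteq> j}"

end

theory Submission
  imports Defs
begin

text \<open>Take \<open>\<theta>\<^sub>1 = 0\<close> and \<open>\<theta>\<^sub>2 = (\<delta>, \<dots>, \<delta>)\<close> with \<open>\<delta> = 2 max \<kappa> 0 / \<surd>d\<close>, so that the separation is
  \<open>max \<kappa> 0\<close>. The greedy estimator errs as soon as \<open>X\<^sub>2\<close> is closer to \<open>X\<^sup>#\<^sub>1\<close> than \<open>X\<^sub>1\<close> is, i.e.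
  when \<open>Z = \<parallel>X\<^sub>1 - X\<^sup>#\<^sub>1\<parallel>\<^sup>2 - \<parallel>X\<^sub>2 - X\<^sup>#\<^sub>1\<parallel>\<^sup>2 > 0\<close>. Since \<open>X\<^sub>1\<close> and \<open>X\<^sup>#\<^sub>1\<close> carry noise of variance 3
  and \<open>X\<^sub>2\<close> only of variance 1, \<open>E Z = d (2 - \<delta>\<^sup>2) > 0\<close>, while \<open>Z - E Z\<close> is a combination of
  six sums of \<open>d\<close> orthogonal centred terms, so its second moment is \<open>O(d)\<close>. Chebyshev's
  inequality then gives \<open>P(Z \<le> 0) \<le> 1/2\<close> once \<open>d \<ge> 300\<close>.\<close>

definition std_normal :: "real measure" where
  "std_normal = density lborel std_normal_density"

lemma prob_space_std_normal: "prob_space std_normal"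
  unfolding std_normal_def by (rule prob_space_normal_density) simp

lemma integrable_std_normal_power: "integrable std_normal (\<lambda>x. x ^ k)"
  unfolding std_normal_def
  by (subst integrable_density) (auto simp: normal_density_nonneg intro: integrable_std_normal_moment)

lemma integral_std_normal_eq:
  "g \<in> borel_measurable borel \<Longrightarrow> integral\<^sup>L std_normal g = (\<integral>x. std_normal_density x * g x \<partial>lborel)"
  unfolding std_normal_def by (subst integral_density) (auto simp: normal_density_nonneg)

lemma integral_std_normal_id: "integral\<^sup>L std_normal (\<lambda>x. x) = 0"
  using integral_std_normal_moment_odd[of 0] by (subst integral_std_normal_eq) auto

lemma integral_std_normal_square: "integral\<^sup>L std_normal (\<lambda>x. x\<^sup>2) = 1"
  using integral_std_normal_moment_even[of 1] by (subst integral_std_normal_eq) auto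

lemma integral_std_normal_power4: "integral\<^sup>L std_normal (\<lambda>x. x ^ 4) = 3"
  using integral_std_normal_moment_even[of 2]
  by (subst integral_std_normal_eq) (auto simp: fact_numeral)

lemma
  shows integrable_std_normal_chi2: "integrable std_normal (\<lambda>x. (x\<^sup>2 - 1)\<^sup>2)"
    and integral_std_normal_chi2: "integral\<^sup>L std_normal (\<lambda>x. (x\<^sup>2 - 1)\<^sup>2) = 2"
proof -
  have expand: "(\<lambda>x::real. (x\<^sup>2 - 1)\<^sup>2) = (\<lambda>x. (x ^ 4 - 2 * x\<^sup>2) + 1)"
    by (rule ext) (simp add: power2_eq_square algebra_simps power4_eq_xxxx)
  note ints = integrable_std_normal_power[of 4] integrable_std_normal_power[of 2]
    integrable_std_normal_power[of 0]
  show "integrable std_normal (\<lambda>x. (x\<^sup>2 - 1)\<^sup>2)"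
    unfolding expand using ints by auto
  show "integral\<^sup>L std_normal (\<lambda>x. (x\<^sup>2 - 1)\<^sup>2) = 2"
    unfolding expand using ints
    by (simp add: integral_std_normal_power4 integral_std_normal_square
        prob_space.prob_space[OF prob_space_std_normal])
qed

lemma
  shows integrable_std_normal_centred_square: "integrable std_normal (\<lambda>x. x\<^sup>2 - 1)"
    and integral_std_normal_centred_square: "integral\<^sup>L std_normal (\<lambda>x. x\<^sup>2 - 1) = 0"
  using integrable_std_normal_power[of 2] integrable_std_normal_power[of 0]
  by (simp_all add: integral_std_normal_square prob_space.prob_space[OF prob_space_std_normal])

lemma prob_space_noise_space: "prob_space (noise_space n)"
  unfolding noise_space_def by (intro prob_space_PiM prob_space_std_normal[unfolded std_normal_def])

lemma PiM_integral_prod_subset: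
  fixes g :: "'i \<Rightarrow> 'a \<Rightarrow> real"
  assumes N: "prob_space N" and "finite I" "S \<subseteq> I" and g: "\<And>j. j \<in> S \<Longrightarrow> integrable N (g j)"
  shows "integrable (PiM I (\<lambda>_. N)) (\<lambda>\<omega>. \<Prod>j\<in>S. g j (\<omega> j))"
    and "integral\<^sup>L (PiM I (\<lambda>_. N)) (\<lambda>\<omega>. \<Prod>j\<in>S. g j (\<omega> j)) = (\<Prod>j\<in>S. integral\<^sup>L N (g j))"
proof -
  interpret product_prob_space "\<lambda>_. N" I
    using N by (simp add: product_prob_space_def product_prob_space_axioms_def
        product_sigma_finite_def prob_space_imp_sigma_finite)
  define g' where "g' j = (if j \<in> S then g j else (\<lambda>_. 1))" for j
  have "integrable N (g' j)" for j
    using g by (auto simp: g'_def)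
  note prod = product_integrable_prod[of I g', OF \<open>finite I\<close> this]
    product_integral_prod[of I g', OF \<open>finite I\<close> this]
  have "(\<Prod>j\<in>I. g' j (\<omega> j)) = (\<Prod>j\<in>S. g j (\<omega> j))" for \<omega>
    using \<open>finite I\<close> \<open>S \<subseteq> I\<close> by (subst prod.mono_neutral_right[of I S]) (auto simp: g'_def)
  moreover have "(\<Prod>j\<in>I. integral\<^sup>L N (g' j)) = (\<Prod>j\<in>S. integral\<^sup>L N (g j))"
    using \<open>finite I\<close> \<open>S \<subseteq> I\<close> prob_space.prob_space[OF N]
    by (subst prod.mono_neutral_right[of I S]) (auto simp: g'_def)
  ultimately show "integrable (PiM I (\<lambda>_. N)) (\<lambda>\<omega>. \<Prod>j\<in>S. g j (\<omega> j))"
    and "integral\<^sup>L (PiM I (\<lambda>_. N)) (\<lambda>\<omega>. \<Prod>j\<in>S. g j (\<omega> j)) = (\<Prod>j\<in>S. integral\<^sup>L N (g j))"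
    using prod by simp_all
qed

lemma integral_square_sum_orthogonal:
  fixes f :: "'k::finite \<Rightarrow> 'a \<Rightarrow> real"
  assumes "\<And>k l. integrable M (\<lambda>\<omega>. f k \<omega> * f l \<omega>)"
    and "\<And>k l. integral\<^sup>L M (\<lambda>\<omega>. f k \<omega> * f l \<omega>) = (if k = l then c else 0)"
  shows "integrable M (\<lambda>\<omega>. (\<Sum>k\<in>UNIV. f k \<omega>)\<^sup>2)"
    and "integral\<^sup>L M (\<lambda>\<omega>. (\<Sum>k\<in>UNIV. f k \<omega>)\<^sup>2) = c * real CARD('k)"
proof -
  have expand: "(\<lambda>\<omega>. (\<Sum>k\<in>UNIV. f k \<omega>)\<^sup>2) = (\<lambda>\<omega>. \<Sum>k\<in>UNIV. \<Sum>l\<in>UNIV. f k \<omega> * f l \<omega>)"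
    by (rule ext) (simp add: power2_eq_square sum_product)
  show "integrable M (\<lambda>\<omega>. (\<Sum>k\<in>UNIV. f k \<omega>)\<^sup>2)"
    unfolding expand using assms(1) by auto
  have "integral\<^sup>L M (\<lambda>\<omega>. \<Sum>k\<in>UNIV. \<Sum>l\<in>UNIV. f k \<omega> * f l \<omega>)
      = (\<Sum>k\<in>UNIV. \<Sum>l\<in>UNIV. integral\<^sup>L M (\<lambda>\<omega>. f k \<omega> * f l \<omega>))"
    using assms(1) by (simp add: integrable_sum)
  then show "integral\<^sup>L M (\<lambda>\<omega>. (\<Sum>k\<in>UNIV. f k \<omega>)\<^sup>2) = c * real CARD('k)"
    unfolding expand by (simp add: assms(2))
qed

lemma PiM_integral_square_coordinate_sum:
  fixes p :: "'k::finite \<Rightarrow> 'i"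
  assumes N: "prob_space N" and I: "finite I" "range p \<subseteq> I" and "inj p"
    and g: "integrable N g" "integrable N (\<lambda>x. (g x)\<^sup>2)" "integral\<^sup>L N g = 0"
  shows "integrable (PiM I (\<lambda>_. N)) (\<lambda>\<omega>. (\<Sum>k\<in>UNIV. g (\<omega> (p k)))\<^sup>2)"
    and "integral\<^sup>L (PiM I (\<lambda>_. N)) (\<lambda>\<omega>. (\<Sum>k\<in>UNIV. g (\<omega> (p k)))\<^sup>2)
           = integral\<^sup>L N (\<lambda>x. (g x)\<^sup>2) * real CARD('k)"
proof -
  have orth: "integrable (PiM I (\<lambda>_. N)) (\<lambda>\<omega>. g (\<omega> (p k)) * g (\<omega> (p l))) \<and>
    integral\<^sup>L (PiM I (\<lambda>_. N)) (\<lambda>\<omega>. g (\<omega> (p k)) * g (\<omega> (p l)))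
      = (if k = l then integral\<^sup>L N (\<lambda>x. (g x)\<^sup>2) else 0)" for k l
  proof (cases "k = l")
    case True
    then show ?thesis
      using PiM_integral_prod_subset[OF N I(1), of "{p k}" "\<lambda>_ x. (g x)\<^sup>2"] I g
      by (auto simp: power2_eq_square)
  next
    case False
    with \<open>inj p\<close> have "p k \<noteq> p l" by (auto dest: injD)
    then show ?thesis
      using False PiM_integral_prod_subset[OF N I(1), of "{p k, p l}" "\<lambda>_. g"] I g by auto
  qed
  show "integrable (PiM I (\<lambda>_. N)) (\<lambda>\<omega>. (\<Sum>k\<in>UNIV. g (\<omega> (p k)))\<^sup>2)"
    and "integral\<^sup>L (PiM I (\<lambda>_. N)) (\<lambda>\<omega>. (\<Sum>k\<in>UNIV. g (\<omega> (p k)))\<^sup>2)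
           = integral\<^sup>L N (\<lambda>x. (g x)\<^sup>2) * real CARD('k)"
    using integral_square_sum_orthogonal[where f = "\<lambda>k \<omega>. g (\<omega> (p k))"] orth by simp_all
qed

lemma PiM_integral_square_coordinate_product_sum:
  fixes p q :: "'k::finite \<Rightarrow> 'i"
  assumes N: "prob_space N" and I: "finite I" "range p \<subseteq> I" "range q \<subseteq> I"
    and "inj p" "inj q" "range p \<inter> range q = {}"
    and g: "integrable N g" "integrable N (\<lambda>x. (g x)\<^sup>2)" "integral\<^sup>L N g = 0"
  shows "integrable (PiM I (\<lambda>_. N)) (\<lambda>\<omega>. (\<Sum>k\<in>UNIV. g (\<omega> (p k)) * g (\<omega> (q k)))\<^sup>2)"
    and "integral\<^sup>L (PiM I (\<lambda>_. N)) (\<lambda>\<omega>. (\<Sum>k\<in>UNIV. g (\<omega> (p k)) * g (\<omega> (q k)))\<^sup>2)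
           = (integral\<^sup>L N (\<lambda>x. (g x)\<^sup>2))\<^sup>2 * real CARD('k)"
proof -
  have pq: "p k \<noteq> q l" "q k \<noteq> p l" for k l
    using \<open>range p \<inter> range q = {}\<close> by auto
  have orth: "integrable (PiM I (\<lambda>_. N)) (\<lambda>\<omega>. (g (\<omega> (p k)) * g (\<omega> (q k))) * (g (\<omega> (p l)) * g (\<omega> (q l)))) \<and>
    integral\<^sup>L (PiM I (\<lambda>_. N)) (\<lambda>\<omega>. (g (\<omega> (p k)) * g (\<omega> (q k))) * (g (\<omega> (p l)) * g (\<omega> (q l))))
      = (if k = l then (integral\<^sup>L N (\<lambda>x. (g x)\<^sup>2))\<^sup>2 else 0)" for k l
  proof (cases "k = l")
    case True
    have "{p k, q k} \<subseteq> I"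
      using I by auto
    note prod = PiM_integral_prod_subset[OF N I(1) this, of "\<lambda>_ x. (g x)\<^sup>2", OF g(2)]
    have "(\<lambda>\<omega>. (g (\<omega> (p k)) * g (\<omega> (q k))) * (g (\<omega> (p l)) * g (\<omega> (q l))))
        = (\<lambda>\<omega>. \<Prod>j\<in>{p k, q k}. (g (\<omega> j))\<^sup>2)"
      using True pq by (simp add: power2_eq_square ac_simps)
    moreover have "(\<Prod>j\<in>{p k, q k}. integral\<^sup>L N (\<lambda>x. (g x)\<^sup>2)) = (integral\<^sup>L N (\<lambda>x. (g x)\<^sup>2))\<^sup>2"
      using pq by (simp add: power2_eq_square)
    ultimately show ?thesis
      using True prod by simp
  next
    case False
    with \<open>inj p\<close> \<open>inj q\<close> have "p k \<noteq> p l" "q k \<noteq> q l" by (auto dest: injD)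
    have "{p k, q k, p l, q l} \<subseteq> I"
      using I by auto
    note prod = PiM_integral_prod_subset[OF N I(1) this, of "\<lambda>_. g", OF g(1)]
    have "(\<lambda>\<omega>. (g (\<omega> (p k)) * g (\<omega> (q k))) * (g (\<omega> (p l)) * g (\<omega> (q l))))
        = (\<lambda>\<omega>. \<Prod>j\<in>{p k, q k, p l, q l}. g (\<omega> j))"
      using pq \<open>p k \<noteq> p l\<close> \<open>q k \<noteq> q l\<close> by (simp add: ac_simps)
    moreover have "(\<Prod>j\<in>{p k, q k, p l, q l}. integral\<^sup>L N g) = 0"
      using g(3) by (subst prod_zero_iff) auto
    ultimately show ?thesis
      using False prod by simp
  qed
  show "integrable (PiM I (\<lambda>_. N)) (\<lambda>\<omega>. (\<Sum>k\<in>UNIV. g (\<omega> (p k)) * g (\<omega> (q k)))\<^sup>2)"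
    and "integral\<^sup>L (PiM I (\<lambda>_. N)) (\<lambda>\<omega>. (\<Sum>k\<in>UNIV. g (\<omega> (p k)) * g (\<omega> (q k)))\<^sup>2)
           = (integral\<^sup>L N (\<lambda>x. (g x)\<^sup>2))\<^sup>2 * real CARD('k)"
    using integral_square_sum_orthogonal[where f = "\<lambda>k \<omega>. g (\<omega> (p k)) * g (\<omega> (q k))"] orth
    by simp_all
qed

lemma (in finite_measure) measure_nonpos_le_second_moment:
  fixes Z V :: "'a \<Rightarrow> real"
  assumes [measurable]: "Z \<in> borel_measurable M" and "integrable M V" and "\<mu> > 0"
    and dominated: "\<And>\<omega>. \<omega> \<in> space M \<Longrightarrow> (Z \<omega> - \<mu>)\<^sup>2 \<le> V \<omega>"
  shows "measure M {\<omega>\<in>space M. Z \<omega> \<le> 0} \<le> integral\<^sup>L M V / \<mu>\<^sup>2"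
proof -
  have [measurable]: "V \<in> borel_measurable M"
    using \<open>integrable M V\<close> by auto
  have "{\<omega>\<in>space M. Z \<omega> \<le> 0} \<subseteq> {\<omega>\<in>space M. \<mu>\<^sup>2 \<le> V \<omega>}"
  proof safe
    fix \<omega> assume "\<omega> \<in> space M" "Z \<omega> \<le> 0"
    then have "\<mu>\<^sup>2 \<le> (\<mu> - Z \<omega>)\<^sup>2"
      using \<open>\<mu> > 0\<close> by (intro power_mono) auto
    then show "\<mu>\<^sup>2 \<le> V \<omega>"
      using dominated[OF \<open>\<omega> \<in> space M\<close>] by (simp add: power2_commute)
  qed
  then have "measure M {\<omega>\<in>space M. Z \<omega> \<le> 0} \<le> measure M {\<omega>\<in>space M. \<mu>\<^sup>2 \<le> V \<omega>}"
    by (intro finite_measure_mono) measurable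
  also have "\<dots> \<le> integral\<^sup>L M V / \<mu>\<^sup>2"
  proof (rule integral_Markov_inequality_measure[OF \<open>integrable M V\<close> sets.top])
    show "AE \<omega> in M. 0 \<le> V \<omega>"
      using dominated by (intro AE_I2) (meson order_trans zero_le_power2)
  qed (use \<open>\<mu> > 0\<close> in simp_all)
  finally show ?thesis .
qed

lemma square_sum6_le:
  fixes x1 x2 x3 x4 x5 x6 :: real
  shows "(x1 + x2 + x3 + x4 + x5 + x6)\<^sup>2 \<le> 6 * (x1\<^sup>2 + x2\<^sup>2 + x3\<^sup>2 + x4\<^sup>2 + x5\<^sup>2 + x6\<^sup>2)"
  using sum_squared_le_sum_of_squares[of "(!) [x1, x2, x3, x4, x5, x6]" "{..<6}"]
  by (simp add: lessThan_nat_numeral algebra_simps)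

lemma distance_excess_centred_eq:
  fixes s a b c \<delta> :: real
  assumes "s\<^sup>2 = 3"
  shows "(s * a - s * b)\<^sup>2 - (\<delta> + c - s * b)\<^sup>2 - (2 - \<delta>\<^sup>2)
    = 3 * (a\<^sup>2 - 1) - (c\<^sup>2 - 1) - 6 * (a * b) - 2 * \<delta> * c + 2 * s * \<delta> * b + 2 * s * (b * c)"
proof -
  have "(s * a - s * b)\<^sup>2 - (\<delta> + c - s * b)\<^sup>2
    = s\<^sup>2 * (a\<^sup>2 - 2 * (a * b)) - (\<delta> + c)\<^sup>2 + 2 * s * b * (\<delta> + c)"
    by (simp add: power2_eq_square algebra_simps)
  then show ?thesis
    using assms by (simp add: power2_eq_square algebra_simps)
qed
definition excess_square_bound ::
    "real \<Rightarrow> ('k::finite \<Rightarrow> real) \<Rightarrow> ('k \<Rightarrow> real) \<Rightarrow> ('k \<Rightarrow> real) \<Rightarrow> real" where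
  "excess_square_bound \<delta> x y z =
    6 * (9 * (\<Sum>k\<in>UNIV. (x k)\<^sup>2 - 1)\<^sup>2 + (\<Sum>k\<in>UNIV. (z k)\<^sup>2 - 1)\<^sup>2
      + 36 * (\<Sum>k\<in>UNIV. x k * y k)\<^sup>2 + 4 * \<delta>\<^sup>2 * (\<Sum>k\<in>UNIV. z k)\<^sup>2
      + 12 * \<delta>\<^sup>2 * (\<Sum>k\<in>UNIV. y k)\<^sup>2 + 12 * (\<Sum>k\<in>UNIV. y k * z k)\<^sup>2)"

lemma sum_distance_excess_square_le:
  fixes x y z :: "'k::finite \<Rightarrow> real"
  assumes "s\<^sup>2 = 3"
  shows "((\<Sum>k\<in>UNIV. (s * x k - s * y k)\<^sup>2) - (\<Sum>k\<in>UNIV. (\<delta> + z k - s * y k)\<^sup>2)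
            - real CARD('k) * (2 - \<delta>\<^sup>2))\<^sup>2 \<le> excess_square_bound \<delta> x y z"
proof -
  have "(\<Sum>k\<in>UNIV. (s * x k - s * y k)\<^sup>2) - (\<Sum>k\<in>UNIV. (\<delta> + z k - s * y k)\<^sup>2)
          - real CARD('k) * (2 - \<delta>\<^sup>2)
    = (\<Sum>k\<in>UNIV. (s * x k - s * y k)\<^sup>2 - (\<delta> + z k - s * y k)\<^sup>2 - (2 - \<delta>\<^sup>2))"
    by (simp add: sum_subtractf)
  also have "\<dots> = 3 * (\<Sum>k\<in>UNIV. (x k)\<^sup>2 - 1) - (\<Sum>k\<in>UNIV. (z k)\<^sup>2 - 1)
      - 6 * (\<Sum>k\<in>UNIV. x k * y k) - 2 * \<delta> * (\<Sum>k\<in>UNIV. z k)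
      + 2 * s * \<delta> * (\<Sum>k\<in>UNIV. y k) + 2 * s * (\<Sum>k\<in>UNIV. y k * z k)"
    unfolding distance_excess_centred_eq[OF assms]
    by (simp add: sum.distrib sum_subtractf sum_distrib_left)
  finally show ?thesis
    using square_sum6_le[of "3 * (\<Sum>k\<in>UNIV. (x k)\<^sup>2 - 1)" "- (\<Sum>k\<in>UNIV. (z k)\<^sup>2 - 1)"
        "- 6 * (\<Sum>k\<in>UNIV. x k * y k)" "- 2 * \<delta> * (\<Sum>k\<in>UNIV. z k)"
        "2 * s * \<delta> * (\<Sum>k\<in>UNIV. y k)" "2 * s * (\<Sum>k\<in>UNIV. y k * z k)"] assms
    by (simp add: excess_square_bound_def power_mult_distrib)
qed

lemma PiM_integral_excess_square_bound:
  fixes a b c :: "'k::finite \<Rightarrow> 'i"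
  assumes "finite I" "range a \<subseteq> I" "range b \<subseteq> I" "range c \<subseteq> I" "inj a" "inj b" "inj c"
    "range a \<inter> range b = {}" "range b \<inter> range c = {}"
  shows "integrable (PiM I (\<lambda>_. std_normal))
      (\<lambda>\<omega>. excess_square_bound \<delta> (\<lambda>k. \<omega> (a k)) (\<lambda>k. \<omega> (b k)) (\<lambda>k. \<omega> (c k)))"
    and "integral\<^sup>L (PiM I (\<lambda>_. std_normal))
      (\<lambda>\<omega>. excess_square_bound \<delta> (\<lambda>k. \<omega> (a k)) (\<lambda>k. \<omega> (b k)) (\<lambda>k. \<omega> (c k)))
      = 6 * real CARD('k) * (68 + 16 * \<delta>\<^sup>2)"
proof -
  note chi2 = integrable_std_normal_centred_square integrable_std_normal_chi2
    integral_std_normal_centred_square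
  note gauss = integrable_std_normal_power[of 1, simplified] integrable_std_normal_power[of 2]
    integral_std_normal_id
  note N = prob_space_std_normal \<open>finite I\<close>
  note sums = PiM_integral_square_coordinate_sum[OF N assms(2,5) chi2]
    PiM_integral_square_coordinate_sum[OF N assms(4,7) chi2]
    PiM_integral_square_coordinate_sum[OF N assms(3,6) gauss]
    PiM_integral_square_coordinate_sum[OF N assms(4,7) gauss]
    PiM_integral_square_coordinate_product_sum[OF N assms(2,3,5,6,8) gauss]
    PiM_integral_square_coordinate_product_sum[OF N assms(3,4,6,7,9) gauss]
  show "integrable (PiM I (\<lambda>_. std_normal))
      (\<lambda>\<omega>. excess_square_bound \<delta> (\<lambda>k. \<omega> (a k)) (\<lambda>k. \<omega> (b k)) (\<lambda>k. \<omega> (c k)))"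
    unfolding excess_square_bound_def using sums by auto
  show "integral\<^sup>L (PiM I (\<lambda>_. std_normal))
      (\<lambda>\<omega>. excess_square_bound \<delta> (\<lambda>k. \<omega> (a k)) (\<lambda>k. \<omega> (b k)) (\<lambda>k. \<omega> (c k)))
      = 6 * real CARD('k) * (68 + 16 * \<delta>\<^sup>2)"
    unfolding excess_square_bound_def using sums
    by (simp add: integral_std_normal_chi2 integral_std_normal_square algebra_simps)
qed

lemma chebyshev_excess_ratio_le:
  fixes d \<delta> :: real
  assumes "\<delta>\<^sup>2 \<le> 2/25" and "d \<ge> 300"
  shows "6 * d * (68 + 16 * \<delta>\<^sup>2) / (d * (2 - \<delta>\<^sup>2))\<^sup>2 \<le> 1/2"
proof -
  have "(48/25)\<^sup>2 \<le> (2 - \<delta>\<^sup>2)\<^sup>2"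
    using assms(1) by (intro power_mono) auto
  then have "300 * (48/25)\<^sup>2 \<le> d * (2 - \<delta>\<^sup>2)\<^sup>2"
    using assms(2) by (intro mult_mono) auto
  then have "d * 840 \<le> d * (d * (2 - \<delta>\<^sup>2)\<^sup>2)"
    using assms(2) by (intro mult_left_mono) (auto simp: power2_eq_square)
  moreover have "6 * d * (68 + 16 * \<delta>\<^sup>2) \<le> 6 * d * 70"
    using assms by simp
  moreover have "(d * (2 - \<delta>\<^sup>2))\<^sup>2 = d * (d * (2 - \<delta>\<^sup>2)\<^sup>2)"
    by (simp add: power_mult_distrib power2_eq_square)
  ultimately have "6 * d * (68 + 16 * \<delta>\<^sup>2) \<le> (d * (2 - \<delta>\<^sup>2))\<^sup>2 / 2"
    by linarith
  moreover have "0 < (d * (2 - \<delta>\<^sup>2))\<^sup>2"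
    using assms by simp
  ultimately show ?thesis
    by (simp add: pos_divide_le_eq)
qed

lemma noise_distance_excess_pos:
  fixes s \<delta> :: real
  assumes "s\<^sup>2 = 3" and "\<delta>\<^sup>2 \<le> 2/25" and "real CARD('d::finite) \<ge> 300"
  shows "measure (noise_space 2) {\<omega> \<in> space (noise_space 2).
      (\<Sum>k\<in>UNIV. (\<delta> + \<omega> (1, False, k) - s * \<omega> (0, True, k))\<^sup>2)
        < (\<Sum>k::'d\<in>UNIV. (s * \<omega> (0, False, k) - s * \<omega> (0, True, k))\<^sup>2)} \<ge> 1/2"
proof -
  let ?I = "{..<2::nat} \<times> (UNIV :: bool set) \<times> (UNIV :: 'd set)"
  define M :: "(nat \<times> bool \<times> 'd \<Rightarrow> real) measure" where "M = noise_space 2"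
  have M: "M = PiM ?I (\<lambda>_. std_normal)"
    by (simp add: M_def noise_space_def std_normal_def)
  interpret prob_space M
    unfolding M_def by (rule prob_space_noise_space)
  define a b c where "a k = (0::nat, False, k)" and "b k = (0::nat, True, k)"
    and "c k = (1::nat, False, k)" for k :: 'd
  have [measurable]: "(\<lambda>\<omega>. \<omega> (i, t, k)) \<in> borel_measurable M" if "i < 2" for i t k
    using measurable_component_singleton[of "(i, t, k)" ?I "\<lambda>_. std_normal"] that
    unfolding M by (simp add: std_normal_def)
  define Z where "Z \<omega> = (\<Sum>k\<in>UNIV. (s * \<omega> (a k) - s * \<omega> (b k))\<^sup>2)
    - (\<Sum>k\<in>UNIV. (\<delta> + \<omega> (c k) - s * \<omega> (b k))\<^sup>2)" for \<omega>
  define \<mu> where "\<mu> = real CARD('d) * (2 - \<delta>\<^sup>2)"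
  have "\<mu> > 0"
    using assms(2,3) by (simp add: \<mu>_def)
  have "range a \<subseteq> ?I" "range b \<subseteq> ?I" "range c \<subseteq> ?I" "inj a" "inj b" "inj c"
    "range a \<inter> range b = {}" "range b \<inter> range c = {}"
    by (auto simp: a_def b_def c_def inj_def)
  note moments = PiM_integral_excess_square_bound[of ?I, OF _ this, of \<delta>, folded M, simplified]
  have "Z \<in> borel_measurable M"
    unfolding Z_def a_def b_def c_def by measurable
  moreover have "(Z \<omega> - \<mu>)\<^sup>2 \<le> excess_square_bound \<delta> (\<lambda>k. \<omega> (a k)) (\<lambda>k. \<omega> (b k)) (\<lambda>k. \<omega> (c k))"
    for \<omega>
    unfolding Z_def \<mu>_def by (rule sum_distance_excess_square_le[OF assms(1)])
  ultimately have "prob {\<omega>\<in>space M. Z \<omega> \<le> 0} \<le> 6 * real CARD('d) * (68 + 16 * \<delta>\<^sup>2) / \<mu>\<^sup>2"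
    using measure_nonpos_le_second_moment[OF _ moments(1) \<open>\<mu> > 0\<close>] moments(2) by simp
  also have "\<dots> \<le> 1/2"
    unfolding \<mu>_def using chebyshev_excess_ratio_le assms(2,3) .
  finally have "prob {\<omega>\<in>space M. Z \<omega> \<le> 0} \<le> 1/2" .
  moreover have "{\<omega>\<in>space M. Z \<omega> \<le> 0} \<in> events"
    using \<open>Z \<in> borel_measurable M\<close> by measurable
  moreover have "{\<omega>\<in>space M. 0 < Z \<omega>} = space M - {\<omega>\<in>space M. Z \<omega> \<le> 0}"
    by auto
  ultimately have "prob {\<omega>\<in>space M. 0 < Z \<omega>} \<ge> 1/2"
    using prob_compl[of "{\<omega>\<in>space M. Z \<omega> \<le> 0}"] by simp
  then show ?thesis
    unfolding M_def[symmetric] Z_def a_def b_def c_def by simp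
qed

lemma greedy_two_ne_id_iff:
  fixes X Xs :: "nat \<Rightarrow> real^'d::finite"
  shows "greedy X Xs 2 \<noteq> id \<longleftrightarrow> norm (X 1 - Xs 0) < norm (X 0 - Xs 0)"
proof -
  have two: "{..<2::nat} = {0, 1}" by auto
  have second: "gr_prefix X Xs 2 2 = [j, 1 - j]" if "gr_prefix X Xs 2 1 = [j]" "j \<le> 1" for j
  proof -
    have "(LEAST i. i \<in> {..<2} - set [j] \<and>
        (\<forall>i'\<in>{..<2} - set [j]. norm (X i - Xs 1) \<le> norm (X i' - Xs 1))) = 1 - j"
      using \<open>j \<le> 1\<close> by (cases j) (auto simp: two intro!: Least_equality)
    then show ?thesis
      using gr_prefix.simps(2)[of X Xs 2 1] that by (simp add: numeral_2_eq_2)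
  qed
  show ?thesis
  proof (cases "norm (X 0 - Xs 0) \<le> norm (X 1 - Xs 0)")
    case True
    then have "gr_prefix X Xs 2 1 = [0]"
      by (simp add: two Least_eq_0)
    then have "gr_prefix X Xs 2 2 = [0, 1]"
      using second by fastforce
    then have "greedy X Xs 2 = id"
      by (auto simp: greedy_def fun_eq_iff less_2_cases_iff)
    then show ?thesis using True by simp
  next
    case False
    then have "(LEAST i. i \<in> {0::nat, 1} \<and> (\<forall>i'\<in>{0, 1}. norm (X i - Xs 0) \<le> norm (X i' - Xs 0))) = 1"
      by (intro Least_equality) auto
    then have "gr_prefix X Xs 2 1 = [1]"
      by (simp add: two)
    then have "greedy X Xs 2 0 = 1"
      using second by (fastforce simp: greedy_def)
    then show ?thesis using False by auto
  qed
qed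

lemma greedy_error_prob_ge:
  fixes \<sigma> :: "nat \<Rightarrow> real" and \<delta> :: real
  assumes "(\<sigma> 0)\<^sup>2 = 3" and "\<sigma> 1 = 1" and "\<delta>\<^sup>2 \<le> 2/25" and "real CARD('d::finite) \<ge> 300"
  shows "Prob 2 (\<lambda>i. if i = 1 then (\<chi> k::'d. \<delta>) else 0) \<sigma> id (\<lambda>X Xs. greedy X Xs 2 \<noteq> id) \<ge> 1/2"
proof -
  let ?\<theta> = "\<lambda>i::nat. if i = 1 then (\<chi> k::'d. \<delta>) else 0"
  have "greedy (obsX ?\<theta> \<sigma> \<omega>) (obsXs ?\<theta> \<sigma> id \<omega>) 2 \<noteq> id \<longleftrightarrow>
      (\<Sum>k\<in>UNIV. (\<delta> + \<omega> (1, False, k) - \<sigma> 0 * \<omega> (0, True, k))\<^sup>2)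
        < (\<Sum>k\<in>UNIV. (\<sigma> 0 * \<omega> (0, False, k) - \<sigma> 0 * \<omega> (0, True, k))\<^sup>2)" for \<omega>
    unfolding greedy_two_ne_id_iff norm_vec_def L2_set_def real_sqrt_less_iff
    using assms(2) by (simp add: obsX_def obsXs_def xi_def xi_sharp_def)
  then show ?thesis
    unfolding Prob_def using noise_distance_excess_pos[OF assms(1,3,4)] by simp
qed

lemma kappa_bar_two:
  "kappa_bar 2 \<theta> \<sigma> = norm (\<theta> 0 - \<theta> 1) / sqrt ((\<sigma> 0)\<^sup>2 + (\<sigma> 1)\<^sup>2)"
proof -
  let ?r = "norm (\<theta> 0 - \<theta> 1) / sqrt ((\<sigma> 0)\<^sup>2 + (\<sigma> 1)\<^sup>2)"
  have "{norm (\<theta> i - \<theta> j) / sqrt ((\<sigma> i)\<^sup>2 + (\<sigma> j)\<^sup>2) | i j. i < 2 \<and> j < 2 \<and> i \<noteq> j} = {?r}"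
  proof (intro equalityI subsetI)
    fix x assume "x \<in> {norm (\<theta> i - \<theta> j) / sqrt ((\<sigma> i)\<^sup>2 + (\<sigma> j)\<^sup>2) | i j. i < 2 \<and> j < 2 \<and> i \<noteq> j}"
    then obtain i j where "x = norm (\<theta> i - \<theta> j) / sqrt ((\<sigma> i)\<^sup>2 + (\<sigma> j)\<^sup>2)"
      and "(i = 0 \<and> j = 1) \<or> (i = 1 \<and> j = 0)"
      by (auto simp: less_2_cases_iff)
    then show "x \<in> {?r}"
      by (auto simp: norm_minus_commute add.commute)
  next
    fix x assume "x \<in> {?r}"
    then have "x = norm (\<theta> 0 - \<theta> 1) / sqrt ((\<sigma> 0)\<^sup>2 + (\<sigma> 1)\<^sup>2) \<and> (0::nat) < 2 \<and> (1::nat) < 2 \<and> (0::nat) \<noteq> 1"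
      by simp
    then show "x \<in> {norm (\<theta> i - \<theta> j) / sqrt ((\<sigma> i)\<^sup>2 + (\<sigma> j)\<^sup>2) | i j. i < 2 \<and> j < 2 \<and> i \<noteq> j}"
      by blast
  qed
  then show ?thesis
    unfolding kappa_bar_def by simp
qed

lemma norm_vec_const: "norm (\<chi> k::'d::finite. c) = \<bar>c\<bar> * sqrt (real CARD('d))"
  by (simp add: norm_vec_def L2_set_def real_sqrt_mult mult.commute)

lemma ln_6_bound: "300 \<le> 225 * ln (6::real)"
proof -
  have "exp (4::real) = exp 1 ^ 4"
    by (simp add: exp_of_nat_mult[symmetric])
  also have "\<dots> \<le> 3 ^ 4"
    by (intro power_mono exp_le) auto
  also have "\<dots> \<le> (6::real) ^ 3"
    by simp
  finally have "4 \<le> ln ((6::real) ^ 3)"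
    by (subst ln_ge_iff) auto
  then show ?thesis
    using ln_realpow[of "6::real" 3] by simp
qed

theorem theorem5:
  fixes \<sigma> :: "nat \<Rightarrow> real" and \<kappa> :: real
  assumes "real CARD('d::finite) \<ge> 225 * ln 6"
    and "\<sigma> 0 > 0" and "\<sigma> 1 > 0" and "(\<sigma> 0)\<^sup>2 = 3" and "(\<sigma> 1)\<^sup>2 = 1"
    and "\<kappa> < 0.1 * sqrt (2 * real CARD('d))"
  shows "(SUP \<theta> \<in> {\<theta> :: nat \<Rightarrow> real^'d. kappa_bar 2 \<theta> \<sigma> \<ge> \<kappa>}.
            Prob 2 \<theta> \<sigma> id (\<lambda>X Xs. greedy X Xs 2 \<noteq> id)) \<ge> 1 / 2"
proof -
  define d where "d = real CARD('d)"
  define \<delta> where "\<delta> = 2 * max \<kappa> 0 / sqrt d"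
  define \<theta> where "\<theta> = (\<lambda>i::nat. if i = 1 then (\<chi> k::'d. \<delta>) else 0)"
  have "d \<ge> 300"
    using assms(1) ln_6_bound by (simp add: d_def)
  have "\<sigma> 1 = 1"
    using assms(3,5) by (simp add: power2_eq_1_iff)
  have "max \<kappa> 0 \<le> 0.1 * sqrt 2 * sqrt d"
    using assms(6) by (auto simp: d_def real_sqrt_mult max_def)
  then have "\<delta> \<le> sqrt 2 / 5" and "0 \<le> \<delta>"
    using \<open>d \<ge> 300\<close> by (simp_all add: \<delta>_def divide_le_eq)
  then have "\<delta>\<^sup>2 \<le> 2/25"
    using power_mono[of \<delta> "sqrt 2 / 5" 2] by (simp add: power_divide)
  have "norm (\<theta> 0 - \<theta> 1) = 2 * max \<kappa> 0"
    using \<open>0 \<le> \<delta>\<close> \<open>d \<ge> 300\<close> by (simp add: \<theta>_def norm_vec_const \<delta>_def d_def[symmetric])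
  then have "\<theta> \<in> {\<theta>. kappa_bar 2 \<theta> \<sigma> \<ge> \<kappa>}"
    using assms(4,5) by (simp add: kappa_bar_two)
  moreover have "1/2 \<le> Prob 2 \<theta> \<sigma> id (\<lambda>X Xs. greedy X Xs 2 \<noteq> id)"
    unfolding \<theta>_def using greedy_error_prob_ge assms(4) \<open>\<sigma> 1 = 1\<close> \<open>\<delta>\<^sup>2 \<le> 2/25\<close> \<open>d \<ge> 300\<close>
    by (simp add: d_def)
  moreover have "bdd_above ((\<lambda>\<theta>. Prob 2 \<theta> \<sigma> id (\<lambda>X Xs. greedy X Xs 2 \<noteq> id)) ` A)" for A
    unfolding Prob_def
    by (intro bdd_aboveI[where M = 1]) (auto intro: prob_space.prob_le_1[OF prob_space_noise_space])
  ultimately show ?thesis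
    by (intro cSUP_upper2) auto
qed

end
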